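(* Let ${\bf S}\in\{{\bf Tmd},{\bf Tm4d}\}$. Then for every $n\geq 3$, the formula $\gamma(n)$ is not a theorem of ${\bf S}$.
   Context: Formulas are built from a denumerable set of propositional variables $p_1,p_2,\ldots$ by the unary connectives $\neg$, $\Box$ and the binary connective $\to$; $For$ is the set of all formulas. Abbreviations: $\Diamond\alpha:=\neg\Box\neg\alpha$, $\alpha\vee\beta:=\neg\alpha\to\beta$. For formulas $\alpha_1,\ldots,\alpha_k$ ($k\ge 2$), $\bigvee\{\alpha_1,\ldots,\alpha_k\}:=((\ldots((\alpha_1\vee\alpha_2)\vee\alpha_3)\vee\ldots)\vee\alpha_k)$. For $n\geq 3$: $\alpha(n)=\bigvee\{p_j: 1\le j\le n\}$, $\beta_i(n)=\bigvee\{p_j:1\le j\le n,\ j\ne i\}$ for $1\le i\le n$, and $\gamma(n)=\bigvee\{\Box\neg\Box\alpha(n)\to\Box\neg\Box\beta_i(n): 1\le i\le n\}$. ${\bf Tmd}$ is the Hilbert calculus whose axioms are all instances (over $For$) of the axiom schemas of a standard Hilbert calculus for classical propositional logic in the signature $\{\neg,\to\}$, plus all instances of: (K) $\Box(\alpha\to\beta)\to(\Box\alpha\to\Box\beta)$; (Kdet) $\Box(\alpha\to\beta)\to(\Diamond\alpha\to\Box\beta)$; (K2) $\Diamond(\alpha\to\beta)\to(\Box\alpha\to\Diamond\beta)$; (M1) $\neg\Diamond\alpha\to\Box(\alpha\to\beta)$; (M2) $\Box\beta\to\Box(\alpha\to\beta)$; (M3) $\Diamond\beta\to\Diamond(\alpha\to\beta)$;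 (M4) $\Diamond\neg\alpha\to\Diamond(\alpha\to\beta)$; (T) $\Box\alpha\to\alpha$; (DN1) $\Box\alpha\to\Box\neg\neg\alpha$; (DN2) $\Box\neg\neg\alpha\to\Box\alpha$; modus ponens is the only rule. ${\bf Tm4d}$ (also written ${\bf T4md}$) is ${\bf Tmd}$ plus (4) $\Box\alpha\to\Box\Box\alpha$. *)

theory Defs
  imports Main
begin

datatype form = Var nat | Neg form | Box form | Imp form form

definition Dia :: "form \<Rightarrow> form" where "Dia a = Neg (Box (Neg a))"
definition Or :: "form \<Rightarrow> form \<Rightarrow> form" where "Or a b = Imp (Neg a) b"

fun BigOr :: "form list \<Rightarrow> form" where
  "BigOr [] = Var 0"  (* unused: only applied to lists of length >= 2 *)
| "BigOr (a # as) = foldl Or a as"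

definition alpha :: "nat \<Rightarrow> form" where
  "alpha n = BigOr (map Var [1..<n+1])"
definition beta :: "nat \<Rightarrow> nat \<Rightarrow> form" where
  "beta n i = BigOr (map Var (filter (\<lambda>j. j \<noteq> i) [1..<n+1]))"
definition gamma :: "nat \<Rightarrow> form" where
  "gamma n = BigOr (map (\<lambda>i. Imp (Box (Neg (Box (alpha n)))) (Box (Neg (Box (beta n i))))) [1..<n+1])"

inductive cpc_ax :: "form \<Rightarrow> bool" where
  A1: "cpc_ax (Imp a (Imp b a))"
| A2: "cpc_ax (Imp (Imp a (Imp b c)) (Imp (Imp a b) (Imp a c)))"
| A3: "cpc_ax (Imp (Imp (Neg a) (Neg b)) (Imp b a))"

inductive tmd_ax :: "form \<Rightarrow> bool" where
  CPC: "cpc_ax a \<Longrightarrow> tmd_ax a"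
| K: "tmd_ax (Imp (Box (Imp a b)) (Imp (Box a) (Box b)))"
| Kdet: "tmd_ax (Imp (Box (Imp a b)) (Imp (Dia a) (Box b)))"
| K2: "tmd_ax (Imp (Dia (Imp a b)) (Imp (Box a) (Dia b)))"
| M1: "tmd_ax (Imp (Neg (Dia a)) (Box (Imp a b)))"
| M2: "tmd_ax (Imp (Box b) (Box (Imp a b)))"
| M3: "tmd_ax (Imp (Dia b) (Dia (Imp a b)))"
| M4: "tmd_ax (Imp (Dia (Neg a)) (Dia (Imp a b)))"
| T: "tmd_ax (Imp (Box a) a)"
| DN1: "tmd_ax (Imp (Box a) (Box (Neg (Neg a))))"
| DN2: "tmd_ax (Imp (Box (Neg (Neg a))) (Box a))"

inductive tm4d_ax :: "form \<Rightarrow> bool" where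
  Tmd: "tmd_ax a \<Longrightarrow> tm4d_ax a"
| Four: "tm4d_ax (Imp (Box a) (Box (Box a)))"

inductive derivable :: "(form \<Rightarrow> bool) \<Rightarrow> form \<Rightarrow> bool" for Ax where
  ax: "Ax a \<Longrightarrow> derivable Ax a"
| mp: "derivable Ax (Imp a b) \<Longrightarrow> derivable Ax a \<Longrightarrow> derivable Ax b"

end

theory Submission
  imports Defs
begin

(*
  Tm4d is sound for a three-valued semantics that depends on a chosen formula A. Every
  formula gets a grade, 1 (necessary), -1 (impossible) or 0 (contingent), and a truth value
  at a designated world. Box a is true iff a is necessary; Box a is necessary when a is,
  impossible when a is the chosen A but not necessary, and contingent otherwise; all
  axioms of Tm4d are true and modus ponens preserves truth.
  For A = alpha n, all disjunctions of variables are contingent, so Box (Neg (Box (alpha n)))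
  is true while each Box (Neg (Box (beta n i))) is false since beta n i differs from
  alpha n: every disjunct of gamma n is false.
*)

fun grade :: "form \<Rightarrow> form \<Rightarrow> int" where
  "grade A (Var k) = 0"
| "grade A (Neg a) = - grade A a"
| "grade A (Imp a b) =
     (if grade A a = -1 \<or> grade A b = 1 then 1
      else if grade A a = 1 \<and> grade A b = -1 then -1 else 0)"
| "grade A (Box a) = (if grade A a = 1 then 1 else if a = A then -1 else 0)"

fun holds :: "form \<Rightarrow> form \<Rightarrow> bool" where
  "holds A (Var k) = True"
| "holds A (Neg a) = (\<not> holds A a)"
| "holds A (Imp a b) = (holds A a \<longrightarrow> holds A b)"
| "holds A (Box a) = (grade A a = 1)"

lemma holds_Dia: "holds A (Dia a) \<longleftrightarrow> grade A a \<noteq> -1"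
  by (auto simp: Dia_def)

lemma holds_if_grade:
  "(grade A a = 1 \<longrightarrow> holds A a) \<and> (grade A a = -1 \<longrightarrow> \<not> holds A a)"
  by (induction a) auto

lemma holds_tm4d_ax: "tm4d_ax a \<Longrightarrow> holds A a"
proof (induction rule: tm4d_ax.induct)
  case (Tmd a)
  then show ?case
  proof (induction rule: tmd_ax.induct)
    case (CPC a)
    then show ?case by (induction rule: cpc_ax.induct) auto
  next
    case (T a)
    then show ?case using holds_if_grade[of A a] by auto
  qed (auto simp: holds_Dia)
qed simp

lemma derivable_mono:
  assumes "derivable Ax a" and "\<And>b. Ax b \<Longrightarrow> Ax' b"
  shows "derivable Ax' a"
  using assms by induction (auto intro: derivable.intros)

lemma holds_derivable_tm4d: "derivable tm4d_ax a \<Longrightarrow> holds A a"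
  by (induction rule: derivable.induct) (auto simp: holds_tm4d_ax)

fun vars :: "form \<Rightarrow> nat set" where
  "vars (Var k) = {k}"
| "vars (Neg a) = vars a"
| "vars (Imp a b) = vars a \<union> vars b"
| "vars (Box a) = vars a"

lemma vars_foldl_Or: "vars (foldl Or a as) = vars a \<union> (\<Union>b\<in>set as. vars b)"
  by (induction as arbitrary: a) (auto simp: Or_def)

lemma grade_foldl_Or:
  "grade A a = 0 \<Longrightarrow> \<forall>b\<in>set as. grade A b = 0 \<Longrightarrow> grade A (foldl Or a as) = 0"
  by (induction as arbitrary: a) (auto simp: Or_def)

lemma holds_foldl_Or: "holds A (foldl Or a as) \<longleftrightarrow> holds A a \<or> (\<exists>b\<in>set as. holds A b)"
  by (induction as arbitrary: a) (auto simp: Or_def)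

lemma vars_BigOr_Var: "ks \<noteq> [] \<Longrightarrow> vars (BigOr (map Var ks)) = set ks"
  by (cases ks) (auto simp: vars_foldl_Or)

lemma grade_BigOr_Var: "ks \<noteq> [] \<Longrightarrow> grade A (BigOr (map Var ks)) = 0"
  by (cases ks) (simp_all add: grade_foldl_Or)

lemma holds_BigOr: "as \<noteq> [] \<Longrightarrow> holds A (BigOr as) \<longleftrightarrow> (\<exists>a\<in>set as. holds A a)"
  by (cases as) (auto simp: holds_foldl_Or)

lemma beta_nonempty: "2 \<le> n \<Longrightarrow> filter (\<lambda>j. j \<noteq> i) [1..<n+1] \<noteq> []"
  by (cases "i = 1") (auto simp: filter_empty_conv)

lemma vars_alpha: "1 \<le> n \<Longrightarrow> vars (alpha n) = {1..n}"
  unfolding alpha_def by (subst vars_BigOr_Var) auto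

lemma vars_beta: "2 \<le> n \<Longrightarrow> vars (beta n i) = {1..n} - {i}"
  unfolding beta_def by (subst vars_BigOr_Var) (auto simp: beta_nonempty)

lemma beta_neq_alpha: "2 \<le> n \<Longrightarrow> i \<in> {1..n} \<Longrightarrow> beta n i \<noteq> alpha n"
  using vars_alpha[of n] vars_beta[of n i] by auto

lemma not_holds_gamma:
  assumes "2 \<le> n"
  shows "\<not> holds (alpha n) (gamma n)"
proof -
  have grade_alpha: "grade (alpha n) (alpha n) = 0"
    using assms unfolding alpha_def by (subst grade_BigOr_Var) auto
  have grade_beta: "grade (alpha n) (beta n i) = 0" for i
    using assms unfolding beta_def by (subst grade_BigOr_Var) (auto simp: beta_nonempty)
  have "\<not> holds (alpha n) (Imp (Box (Neg (Box (alpha n)))) (Box (Neg (Box (beta n i)))))"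
    if "i \<in> {1..n}" for i
    using grade_alpha grade_beta[of i] beta_neq_alpha[OF assms that] by simp
  then show ?thesis
    using assms by (auto simp: gamma_def holds_BigOr simp del: holds.simps)
qed

theorem mainTheorem16:
  shows "\<forall>S \<in> {tmd_ax, tm4d_ax}. \<forall>n::nat. n \<ge> 3 \<longrightarrow> \<not> derivable S (gamma n)"
proof (intro ballI allI impI)
  fix S n
  assume S: "S \<in> {tmd_ax, tm4d_ax}" and "n \<ge> (3::nat)"
  have "derivable S (gamma n) \<Longrightarrow> derivable tm4d_ax (gamma n)"
    using S by (auto elim: derivable_mono intro: tm4d_ax.Tmd)
  then show "\<not> derivable S (gamma n)"
    using not_holds_gamma[of n] holds_derivable_tm4d \<open>n \<ge> 3\<close> by fastforce
qed

end
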